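(* Let $\nu_0=\mathcal N(0,\tau_0^{-2})$ and $\nu_1=\mathcal N(0,\tau_1^{-2})$ (identified with their densities on $\mathbb{R}$) with $0<\tau_1^2<\tau_0^2$, let $\eta\in[0,1)$, and define $\xi(x)=-\log\big(\eta\,\nu_0(x)+(1-\eta)\,\nu_1(x)\big)$. Then for all $x\in\mathbb{R}$, $$\xi''(x)\ge\tau_1^2-2(\tau_0^2-\tau_1^2)\log\Big(1+\frac{\eta\tau_0}{(1-\eta)e\tau_1}\Big).$$ *)

theory Defs
  imports "HOL-Probability.Probability"
begin

definition gauss_prec :: "real \<Rightarrow> real \<Rightarrow> real" where
  "gauss_prec \<tau> x = normal_density 0 (1 / \<tau>) x"

end

theory Submission
  imports Defs
begin

text \<open>
  Write the mixture as \<open>a + b\<close> with \<open>a = \<eta> \<nu>\<^sub>0\<close>, \<open>b = (1 - \<eta>) \<nu>\<^sub>1\<close>, and put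
  \<open>w = a / (a + b)\<close>, \<open>D = \<tau>\<^sub>0\<^sup>2 - \<tau>\<^sub>1\<^sup>2\<close>, \<open>t = D x\<^sup>2 / 2\<close>. Since
  \<open>a' = - \<tau>\<^sub>0\<^sup>2 x a\<close> and \<open>b' = - \<tau>\<^sub>1\<^sup>2 x b\<close>, one gets
  \<open>\<xi>'' = \<tau>\<^sub>1\<^sup>2 + D w - 2 D t w (1 - w)\<close>, while the ratio \<open>r = a / b\<close> decays like
  \<open>exp (- t)\<close>, so that \<open>r exp (t - 1) = \<eta> \<tau>\<^sub>0 / ((1 - \<eta>) e \<tau>\<^sub>1)\<close> does not depend
  on \<open>x\<close>. It remains to bound \<open>t w (1 - w) \<le> t w\<close> by \<open>ln (1 + r exp (t - 1))\<close>: as a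
  function of \<open>t\<close> the latter is convex with tangent \<open>ln (1 + r) + (t - 1) w\<close> at \<open>t = 1\<close>,
  and \<open>ln (1 + r) \<ge> w\<close>.
\<close>

lemma ln_add_one_mult_exp_ge:
  fixes r t :: real
  assumes "0 \<le> r"
  shows "t * (r / (1 + r)) \<le> ln (1 + r * exp (t - 1))"
proof -
  define p where "p = r / (1 + r)"
  have p: "0 \<le> p" "p \<le> 1"
    using assms by (auto simp: p_def)
  have "exp (p * (t - 1)) \<le> (1 - p) + p * exp (t - 1)"
    using convex_onD[OF exp_convex, of p 0 "t - 1"] p by simp
  also have "\<dots> = (1 + r * exp (t - 1)) / (1 + r)"
    using assms by (simp add: p_def field_simps)
  finally have "p * (t - 1) \<le> ln ((1 + r * exp (t - 1)) / (1 + r))"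
    using assms by (subst ln_ge_iff) (auto intro!: divide_pos_pos add_pos_nonneg)
  moreover have "0 < 1 + r * exp (t - 1)"
    using assms by (simp add: add_pos_nonneg)
  ultimately have "p * (t - 1) \<le> ln (1 + r * exp (t - 1)) - ln (1 + r)"
    using assms by (simp add: ln_div)
  moreover have "p \<le> ln (1 + r)"
    using ln_add1_ge[OF assms] by (simp add: p_def add.commute)
  ultimately show ?thesis
    by (simp add: p_def[symmetric] algebra_simps)
qed

lemma ln_add_one_div_mult_exp_ge:
  fixes a b t :: real
  assumes "0 \<le> a" "0 < b" "0 \<le> t"
  shows "t * (a * b / (a + b)\<^sup>2) \<le> ln (1 + a / b * exp (t - 1))"
proof -
  have "a * b / (a + b)\<^sup>2 = a / (a + b) * (b / (a + b))"
    by (simp add: power2_eq_square)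
  also have "\<dots> \<le> a / (a + b)"
    using assms by (intro mult_left_le) auto
  also have "\<dots> = (a / b) / (1 + a / b)"
    using assms by (simp add: field_simps)
  finally have "a * b / (a + b)\<^sup>2 \<le> (a / b) / (1 + a / b)" .
  then have "t * (a * b / (a + b)\<^sup>2) \<le> t * ((a / b) / (1 + a / b))"
    using assms(3) by (rule mult_left_mono)
  also have "\<dots> \<le> ln (1 + a / b * exp (t - 1))"
    using assms by (intro ln_add_one_mult_exp_ge) simp
  finally show ?thesis .
qed

lemma gauss_prec_eq:
  assumes "0 < \<tau>"
  shows "gauss_prec \<tau> x = \<tau> / sqrt (2 * pi) * exp (- (\<tau>\<^sup>2 * x\<^sup>2 / 2))"
proof -
  have "sqrt (2 * pi * (1 / \<tau>)\<^sup>2) = sqrt (2 * pi) / \<tau>"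
    using assms by (simp add: real_sqrt_mult real_sqrt_divide power_divide)
  then show ?thesis
    using assms by (simp add: gauss_prec_def normal_density_def power_divide)
qed

lemma gauss_prec_pos: "0 < \<tau> \<Longrightarrow> 0 < gauss_prec \<tau> x"
  by (simp add: gauss_prec_def normal_density_pos)

lemma gauss_prec_has_real_derivative:
  assumes "0 < \<tau>"
  shows "(gauss_prec \<tau> has_real_derivative - \<tau>\<^sup>2 * x * gauss_prec \<tau> x) (at x)"
proof -
  define c where "c = \<tau> / sqrt (2 * pi)"
  have "gauss_prec \<tau> = (\<lambda>y. c * exp (- (\<tau>\<^sup>2 * y\<^sup>2 / 2)))"
    using assms by (simp add: fun_eq_iff c_def gauss_prec_eq)
  then show ?thesis
    by (auto intro!: derivative_eq_intros)
qed

lemma gauss_prec_ratio: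
  assumes "0 < \<tau>0" "0 < \<tau>1"
  shows "gauss_prec \<tau>0 x / gauss_prec \<tau>1 x = \<tau>0 / \<tau>1 * exp (- ((\<tau>0\<^sup>2 - \<tau>1\<^sup>2) * x\<^sup>2 / 2))"
proof -
  have "exp (- (\<tau>0\<^sup>2 * x\<^sup>2 / 2)) = exp (- (\<tau>1\<^sup>2 * x\<^sup>2 / 2)) * exp (- ((\<tau>0\<^sup>2 - \<tau>1\<^sup>2) * x\<^sup>2 / 2))"
    by (simp add: mult_exp_exp field_simps)
  then show ?thesis
    using assms by (simp add: gauss_prec_eq)
qed

lemma gauss_mixture_weight_has_real_derivative:
  fixes a b :: "real \<Rightarrow> real"
  assumes a: "(a has_real_derivative - s0 * x * a x) (at x)"
    and b: "(b has_real_derivative - s1 * x * b x) (at x)"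
    and nz: "a x + b x \<noteq> 0"
  shows "((\<lambda>y. a y / (a y + b y)) has_real_derivative
           - (s0 - s1) * x * (a x * b x / (a x + b x)\<^sup>2)) (at x)"
  using DERIV_divide[OF a DERIV_add[OF a b] nz]
  by (rule DERIV_cong) (simp add: power2_eq_square field_simps)

lemma neg_ln_gauss_mixture_has_real_derivative:
  fixes a b :: "real \<Rightarrow> real"
  assumes a: "(a has_real_derivative - s0 * x * a x) (at x)"
    and b: "(b has_real_derivative - s1 * x * b x) (at x)"
    and pos: "0 < a x + b x"
  shows "((\<lambda>y. - ln (a y + b y)) has_real_derivative
           x * (s1 + (s0 - s1) * (a x / (a x + b x)))) (at x)"
  using DERIV_minus[OF DERIV_chain2[OF DERIV_ln_divide[OF pos] DERIV_add[OF a b]]]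
  by (rule DERIV_cong) (use pos in \<open>simp add: field_simps\<close>)

lemma neg_ln_gauss_mixture_second_deriv:
  fixes a b :: "real \<Rightarrow> real"
  assumes a: "\<And>x. (a has_real_derivative - s0 * x * a x) (at x)"
    and b: "\<And>x. (b has_real_derivative - s1 * x * b x) (at x)"
    and pos: "\<And>x. 0 < a x + b x"
  shows "deriv (deriv (\<lambda>y. - ln (a y + b y))) x =
           s1 + (s0 - s1) * (a x / (a x + b x))
             - x\<^sup>2 * (s0 - s1)\<^sup>2 * (a x * b x / (a x + b x)\<^sup>2)"
proof -
  define v where "v = a x * b x / (a x + b x)\<^sup>2"
  have first_deriv: "deriv (\<lambda>y. - ln (a y + b y)) = (\<lambda>y. y * (s1 + (s0 - s1) * (a y / (a y + b y))))"
    using neg_ln_gauss_mixture_has_real_derivative[OF a b pos] by (intro ext DERIV_imp_deriv)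
  have "((\<lambda>y. a y / (a y + b y)) has_real_derivative - (s0 - s1) * x * v) (at x)"
    unfolding v_def using pos[of x] by (intro gauss_mixture_weight_has_real_derivative a b) simp
  then have "((\<lambda>y. y * (s1 + (s0 - s1) * (a y / (a y + b y)))) has_real_derivative
      s1 + (s0 - s1) * (a x / (a x + b x)) - x\<^sup>2 * (s0 - s1)\<^sup>2 * v) (at x)"
    by (rule DERIV_cong[OF DERIV_mult'[OF DERIV_ident DERIV_add[OF DERIV_const DERIV_cmult]]])
      (simp add: power2_eq_square algebra_simps)
  then show ?thesis
    unfolding first_deriv v_def by (rule DERIV_imp_deriv)
qed

lemma neg_ln_gauss_mixture_second_deriv_ge:
  fixes a b :: "real \<Rightarrow> real"
  assumes a: "\<And>x. (a has_real_derivative - s0 * x * a x) (at x)"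
    and b: "\<And>x. (b has_real_derivative - s1 * x * b x) (at x)"
    and a_nonneg: "\<And>x. 0 \<le> a x" and b_pos: "\<And>x. 0 < b x" and "s1 < s0"
  shows "deriv (deriv (\<lambda>y. - ln (a y + b y))) x \<ge>
           s1 - 2 * (s0 - s1) * ln (1 + a x / b x * exp ((s0 - s1) * x\<^sup>2 / 2 - 1))"
proof -
  define D where "D = s0 - s1"
  define t where "t = D * x\<^sup>2 / 2"
  define w where "w = a x / (a x + b x)"
  define v where "v = a x * b x / (a x + b x)\<^sup>2"
  define L where "L = ln (1 + a x / b x * exp (t - 1))"
  have "0 < D"
    using \<open>s1 < s0\<close> by (simp add: D_def)
  have "0 < a y + b y" for y
    using a_nonneg b_pos by (rule add_nonneg_pos)
  then have second_deriv: "deriv (deriv (\<lambda>y. - ln (a y + b y))) x = s1 + D * w - x\<^sup>2 * D\<^sup>2 * v"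
    unfolding D_def w_def v_def by (rule neg_ln_gauss_mixture_second_deriv[OF a b])
  have "t * v \<le> L"
    unfolding L_def v_def t_def using \<open>0 < D\<close>
    by (intro ln_add_one_div_mult_exp_ge a_nonneg b_pos) simp
  then have "x\<^sup>2 * D\<^sup>2 * v \<le> 2 * D * L"
    using \<open>0 < D\<close> by (simp add: t_def power2_eq_square ac_simps)
  moreover have "0 \<le> D * w"
    using \<open>0 < D\<close> a_nonneg[of x] b_pos[of x] unfolding w_def
    by (intro mult_nonneg_nonneg divide_nonneg_pos add_nonneg_pos) auto
  ultimately show ?thesis
    using second_deriv unfolding D_def L_def t_def by linarith
qed

theorem mainTheorem11:
  fixes \<tau>0 \<tau>1 \<eta> :: real and \<xi> :: "real \<Rightarrow> real"
  assumes "\<tau>0 > 0" and "\<tau>1 > 0" and "\<tau>1\<^sup>2 < \<tau>0\<^sup>2"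
    and "0 \<le> \<eta>" and "\<eta> < 1"
    and "\<xi> = (\<lambda>x. - ln (\<eta> * gauss_prec \<tau>0 x + (1 - \<eta>) * gauss_prec \<tau>1 x))"
  shows "\<forall>x. deriv (deriv \<xi>) x \<ge>
           \<tau>1\<^sup>2 - 2 * (\<tau>0\<^sup>2 - \<tau>1\<^sup>2) * ln (1 + (\<eta> * \<tau>0) / ((1 - \<eta>) * exp 1 * \<tau>1))"
proof
  fix x :: real
  define a where "a y = \<eta> * gauss_prec \<tau>0 y" for y
  define b where "b y = (1 - \<eta>) * gauss_prec \<tau>1 y" for y
  define t where "t = (\<tau>0\<^sup>2 - \<tau>1\<^sup>2) * x\<^sup>2 / 2"
  have "a x / b x = \<eta> / (1 - \<eta>) * (gauss_prec \<tau>0 x / gauss_prec \<tau>1 x)"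
    by (simp add: a_def b_def)
  also have "\<dots> = \<eta> * \<tau>0 / ((1 - \<eta>) * \<tau>1) * exp (- t)"
    using assms(1,2) by (simp add: gauss_prec_ratio t_def)
  finally have "a x / b x * exp (t - 1) = \<eta> * \<tau>0 / ((1 - \<eta>) * \<tau>1) * exp (- t + (t - 1))"
    by (simp add: mult_exp_exp)
  also have "\<dots> = (\<eta> * \<tau>0) / ((1 - \<eta>) * exp 1 * \<tau>1)"
    by (simp add: exp_minus field_simps)
  finally have scaled_ratio: "a x / b x * exp (t - 1) = (\<eta> * \<tau>0) / ((1 - \<eta>) * exp 1 * \<tau>1)" .
  have "(a has_real_derivative - \<tau>0\<^sup>2 * y * a y) (at y)"
    and "(b has_real_derivative - \<tau>1\<^sup>2 * y * b y) (at y)" for y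
    unfolding a_def [abs_def] b_def [abs_def] using assms(1,2)
    by (auto intro!: DERIV_cong[OF DERIV_cmult[OF gauss_prec_has_real_derivative]])
  moreover have "0 \<le> a y" and "0 < b y" for y
    using assms by (simp_all add: a_def b_def gauss_prec_pos less_imp_le)
  moreover have "\<xi> = (\<lambda>y. - ln (a y + b y))"
    by (simp add: assms(6) a_def b_def)
  ultimately show "deriv (deriv \<xi>) x \<ge>
      \<tau>1\<^sup>2 - 2 * (\<tau>0\<^sup>2 - \<tau>1\<^sup>2) * ln (1 + (\<eta> * \<tau>0) / ((1 - \<eta>) * exp 1 * \<tau>1))"
    using neg_ln_gauss_mixture_second_deriv_ge[of a "\<tau>0\<^sup>2" b "\<tau>1\<^sup>2" x] assms(3) scaled_ratio
    unfolding t_def by simp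
qed

end
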